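(* There is an absolute constant $C$ such that for every $\epsilon\in(0,1]$ there is an $\epsilon$-edge differentially private algorithm which, given a graph $G$ on $n\ge3$ vertices, outputs a real number $\hat\rho$ with $|\hat\rho-\rho(G)|\le C\sqrt{\log(n)/\epsilon}$ with probability at least $1-1/n$.
   Context: For nonempty $S\subseteq V$, $\rho(S)=|E(S)|/|S|$ with $E(S)$ the edges inside $S$, and $\rho(G)=\max_{\emptyset\ne S\subseteq V}\rho(S)$. Edge-neighboring graphs have the same vertex set and edge sets differing in exactly one edge; an algorithm is $\epsilon$-edge DP if $\Pr[\mathcal A(G)\in O]\le e^\epsilon\Pr[\mathcal A(G')\in O]$ for all edge-neighboring $G,G'$ and all output sets $O$. $\log$ is the natural logarithm. *)

theory Defs
  imports "HOL-Probability.Probability"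
begin

definition all_edges :: "nat \<Rightarrow> nat set set" where
  "all_edges n = {e. \<exists>u v. e = {u, v} \<and> u \<noteq> v \<and> u < n \<and> v < n}"

definition is_graph :: "nat \<Rightarrow> nat set set \<Rightarrow> bool" where
  "is_graph n E \<longleftrightarrow> E \<subseteq> all_edges n"

definition induced_edges :: "nat set set \<Rightarrow> nat set \<Rightarrow> nat set set" where
  "induced_edges E S = {e \<in> E. e \<subseteq> S}"

definition set_density :: "nat set set \<Rightarrow> nat set \<Rightarrow> real" where
  "set_density E S = real (card (induced_edges E S)) / real (card S)"

definition max_density :: "nat \<Rightarrow> nat set set \<Rightarrow> real" where
  "max_density n E = Max {set_density E S | S. S \<noteq> {} \<and> S \<subseteq> {0..<n}}"

definition edge_neighboring :: "nat \<Rightarrow> nat set set \<Rightarrow> nat set set \<Rightarrow> bool" where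
  "edge_neighboring n E E' \<longleftrightarrow> is_graph n E \<and> is_graph n E' \<and>
     card ((E - E') \<union> (E' - E)) = 1"

text \<open>A randomized algorithm maps (n, E) to a probability distribution on the reals.\<close>
definition valid_mechanism :: "(nat \<Rightarrow> nat set set \<Rightarrow> real measure) \<Rightarrow> bool" where
  "valid_mechanism A \<longleftrightarrow> (\<forall>n E. prob_space (A n E) \<and> sets (A n E) = sets borel)"

definition edge_dp :: "real \<Rightarrow> (nat \<Rightarrow> nat set set \<Rightarrow> real measure) \<Rightarrow> bool" where
  "edge_dp \<epsilon> A \<longleftrightarrow> (\<forall>n E E' S. edge_neighboring n E E' \<longrightarrow> S \<in> sets borel \<longrightarrow>
     measure (A n E) S \<le> exp \<epsilon> * measure (A n E') S)"

end

theory Submission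
  imports Defs
begin

text \<open>A single edge can change the maximum subgraph density by a constant, so we release
  instead the maximum density over vertex sets of at least k vertices, which moves by at most
  1/k when one edge changes, through an exponential mechanism on the grid {0,...,n} with rate
  \<epsilon> k / 2. Vertex sets with fewer than k vertices have density at most (k - 1)/2, so the
  truncation costs at most k/2, while the mechanism misses its centre by more than
  O(log n / (\<epsilon> k)) only with probability 1/n. The choice k \<approx> sqrt (log n / \<epsilon>) balances
  the two errors.\<close>

definition exp_weight :: "real \<Rightarrow> real \<Rightarrow> real \<Rightarrow> real" where
  "exp_weight a h y = exp (- a * \<bar>y - h\<bar>)"

definition exp_mech :: "real \<Rightarrow> real set \<Rightarrow> real \<Rightarrow> real pmf" where
  "exp_mech a Y h =
     embed_pmf (\<lambda>y. if y \<in> Y then exp_weight a h y / (\<Sum>z\<in>Y. exp_weight a h z) else 0)"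

lemma exp_weight_pos [simp]: "0 < exp_weight a h y"
  by (simp add: exp_weight_def)

lemma exp_weight_shift:
  assumes "\<bar>h - h'\<bar> \<le> d" "0 \<le> a"
  shows "exp_weight a h y \<le> exp (a * d) * exp_weight a h' y"
proof -
  have "a * \<bar>y - h'\<bar> \<le> a * (\<bar>y - h\<bar> + d)"
    using assms by (intro mult_left_mono) linarith+
  then show ?thesis
    by (simp add: exp_weight_def flip: exp_add) (simp add: algebra_simps)
qed

lemma pmf_exp_mech:
  assumes "finite Y" "Y \<noteq> {}"
  shows "pmf (exp_mech a Y h) y =
    (if y \<in> Y then exp_weight a h y / (\<Sum>z\<in>Y. exp_weight a h z) else 0)"
  unfolding exp_mech_def
proof (rule pmf_embed_pmf)
  let ?Z = "\<Sum>z\<in>Y. exp_weight a h z"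
  have Z: "0 < ?Z" using assms by (simp add: sum_pos)
  then show "\<And>y. 0 \<le> (if y \<in> Y then exp_weight a h y / ?Z else 0)"
    by (simp add: less_imp_le)
  have "(\<integral>\<^sup>+y. ennreal (if y \<in> Y then exp_weight a h y / ?Z else 0) \<partial>count_space UNIV)
      = (\<Sum>y\<in>Y. ennreal (exp_weight a h y / ?Z))"
    using assms by (subst nn_integral_count_space'[of Y]) auto
  also have "\<dots> = ennreal ((\<Sum>y\<in>Y. exp_weight a h y) / ?Z)"
    using Z by (simp add: less_imp_le flip: sum_divide_distrib)
  finally show "(\<integral>\<^sup>+y. ennreal (if y \<in> Y then exp_weight a h y / ?Z else 0) \<partial>count_space UNIV) = 1"
    using Z by simp
qed

lemma measure_exp_mech:
  assumes "finite Y" "Y \<noteq> {}"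
  shows "measure (exp_mech a Y h) S =
    (\<Sum>y\<in>S \<inter> Y. exp_weight a h y) / (\<Sum>y\<in>Y. exp_weight a h y)"
proof -
  have "0 < (\<Sum>y\<in>Y. exp_weight a h y)" using assms by (simp add: sum_pos)
  then have "set_pmf (exp_mech a Y h) = Y"
    by (auto simp: set_pmf_eq pmf_exp_mech[OF assms] exp_weight_def)
  then have "measure (exp_mech a Y h) S = measure (exp_mech a Y h) (S \<inter> Y)"
    by (metis measure_Int_set_pmf)
  also have "\<dots> = (\<Sum>y\<in>S \<inter> Y. pmf (exp_mech a Y h) y)"
    using assms by (simp add: measure_measure_pmf_finite)
  finally show ?thesis
    using assms by (simp add: pmf_exp_mech sum_divide_distrib)
qed

text \<open>Moving the centre by at most d changes every probability by a factor at most
  exp (2 a d): one factor exp (a d) for the weights and one for the normalisation.\<close>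
lemma measure_exp_mech_shift:
  assumes "finite Y" "Y \<noteq> {}" "\<bar>h - h'\<bar> \<le> d" "0 \<le> a"
  shows "measure (exp_mech a Y h) S \<le> exp (2 * a * d) * measure (exp_mech a Y h') S"
proof -
  let ?N = "\<lambda>h. \<Sum>y\<in>S \<inter> Y. exp_weight a h y" and ?Z = "\<lambda>h. \<Sum>y\<in>Y. exp_weight a h y"
  have "\<bar>h' - h\<bar> \<le> d" using assms(3) by linarith
  then have N: "?N h \<le> exp (a * d) * ?N h'" and Z: "?Z h' \<le> exp (a * d) * ?Z h"
    using assms(3,4) by (auto simp: sum_distrib_left intro!: sum_mono exp_weight_shift)
  have pos: "0 < ?Z h" "0 < ?Z h'" using assms(1,2) by (simp_all add: sum_pos)
  have "?N h / ?Z h \<le> exp (a * d) * ?N h' / ?Z h"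
    using N pos by (simp add: divide_right_mono)
  also have "\<dots> \<le> exp (a * d) * ?N h' / (?Z h' / exp (a * d))"
    using Z pos by (intro divide_left_mono) (auto simp: sum_nonneg less_imp_le field_simps)
  also have "\<dots> = exp (2 * a * d) * (?N h' / ?Z h')"
    by (simp add: mult_exp_exp)
  finally show ?thesis
    using assms(1,2) by (simp add: measure_exp_mech)
qed

lemma measure_exp_mech_tail:
  assumes "finite Y" "y0 \<in> Y" "\<bar>y0 - h\<bar> \<le> 1" "0 \<le> a"
  shows "measure (exp_mech a Y h) {y. r \<le> \<bar>y - h\<bar>} \<le> real (card Y) * exp (- a * (r - 1))"
proof -
  let ?T = "{y. r \<le> \<bar>y - h\<bar>} \<inter> Y"
  have "exp (- a) \<le> exp_weight a h y0"
    using assms(3,4) by (simp add: exp_weight_def mult_left_le)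
  also have "\<dots> \<le> (\<Sum>y\<in>Y. exp_weight a h y)"
    using assms(1,2) by (intro member_le_sum) (auto simp: less_imp_le)
  finally have Z: "exp (- a) \<le> (\<Sum>y\<in>Y. exp_weight a h y)" .
  have "(\<Sum>y\<in>?T. exp_weight a h y) \<le> (\<Sum>y\<in>?T. exp (- a * r))"
    using assms(4) by (intro sum_mono) (auto simp: exp_weight_def mult_left_mono)
  also have "\<dots> \<le> real (card Y) * exp (- a * r)"
    using assms(1) by (simp add: card_mono)
  finally have N: "(\<Sum>y\<in>?T. exp_weight a h y) \<le> real (card Y) * exp (- a * r)" .
  have "(\<Sum>y\<in>?T. exp_weight a h y) / (\<Sum>y\<in>Y. exp_weight a h y)
      \<le> real (card Y) * exp (- a * r) / exp (- a)"
    using N Z by (intro frac_le) (auto simp: sum_nonneg less_imp_le)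
  also have "\<dots> = real (card Y) * exp (- a * (r - 1))"
    by (simp add: exp_minus exp_diff field_simps)
  finally show ?thesis
    using assms by (subst measure_exp_mech) auto
qed

lemma is_graph_finite: "is_graph n E \<Longrightarrow> finite E"
proof -
  have "all_edges n \<subseteq> Pow {0..<n}" by (auto simp: all_edges_def)
  then show "is_graph n E \<Longrightarrow> finite E"
    unfolding is_graph_def by (meson finite_Pow_iff finite_atLeastLessThan finite_subset)
qed

lemma card_induced_edges_le:
  assumes "is_graph n E" "finite S"
  shows "2 * card (induced_edges E S) \<le> card S * (card S - 1)"
proof -
  have "induced_edges E S \<subseteq> {B. B \<subseteq> S \<and> card B = 2}"
    using assms(1) by (auto simp: induced_edges_def is_graph_def all_edges_def)
  then have "card (induced_edges E S) \<le> card {B. B \<subseteq> S \<and> card B = 2}"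
    using assms(2) by (intro card_mono) auto
  then show ?thesis by (simp add: n_subsets[OF assms(2)] choose_two)
qed

lemma set_density_nonneg: "0 \<le> set_density E S"
  by (simp add: set_density_def)

lemma set_density_le_half_card:
  assumes "is_graph n E" "finite S" "S \<noteq> {}"
  shows "set_density E S \<le> (real (card S) - 1) / 2"
proof -
  have S: "1 \<le> card S" using assms(2,3) by (simp add: Suc_le_eq card_gt_0_iff)
  have "real (2 * card (induced_edges E S)) \<le> real (card S * (card S - 1))"
    using card_induced_edges_le[OF assms(1,2)] by (simp only: of_nat_le_iff)
  then have "2 * real (card (induced_edges E S)) \<le> real (card S) * (real (card S) - 1)"
    using S by (simp add: of_nat_diff)
  then show ?thesis
    using S by (simp add: set_density_def divide_le_eq field_simps)
qed

lemma edge_neighboring_sym: "edge_neighboring n E E' \<Longrightarrow> edge_neighboring n E' E"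
  by (simp add: edge_neighboring_def Un_commute)

lemma card_induced_edges_neighboring_le:
  assumes "edge_neighboring n E E'"
  shows "card (induced_edges E S) \<le> card (induced_edges E' S) + 1"
proof -
  have fin: "finite E" "finite E'"
    using assms is_graph_finite by (auto simp: edge_neighboring_def)
  have "card (induced_edges E S) \<le> card (induced_edges E' S \<union> (E - E'))"
    using fin by (intro card_mono) (auto simp: induced_edges_def)
  also have "\<dots> \<le> card (induced_edges E' S) + card ((E - E') \<union> (E' - E))"
    using fin by (intro order.trans[OF card_Un_le] add_left_mono card_mono) auto
  finally show ?thesis
    using assms by (simp add: edge_neighboring_def)
qed

lemma set_density_neighboring_le:
  assumes "edge_neighboring n E E'" "k \<le> card S" "1 \<le> k"
  shows "set_density E S \<le> set_density E' S + 1 / real k"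
proof -
  have "set_density E S \<le> (real (card (induced_edges E' S)) + 1) / real (card S)"
    unfolding set_density_def
    using card_induced_edges_neighboring_le[OF assms(1), of S] by (intro divide_right_mono) auto
  also have "\<dots> = set_density E' S + 1 / real (card S)"
    by (simp add: set_density_def add_divide_distrib)
  also have "1 / real (card S) \<le> 1 / real k"
    using assms(2,3) by (intro divide_left_mono) auto
  finally show ?thesis by simp
qed

lemma finite_densities: "finite {set_density E S | S. S \<noteq> {} \<and> S \<subseteq> {0..<n}}"
proof -
  have "{set_density E S | S. S \<noteq> {} \<and> S \<subseteq> {0..<n}} \<subseteq> set_density E ` Pow {0..<n}"
    by auto
  then show ?thesis by (rule finite_subset) simp
qed

lemma set_density_le_max_density:
  "S \<noteq> {} \<Longrightarrow> S \<subseteq> {0..<n} \<Longrightarrow> set_density E S \<le> max_density n E"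
  unfolding max_density_def by (rule Max_ge[OF finite_densities]) blast

lemma max_density_attained:
  assumes "1 \<le> n"
  obtains S where "S \<noteq> {}" "S \<subseteq> {0..<n}" "max_density n E = set_density E S"
proof -
  have "{0} \<subseteq> {0..<n}" using assms by simp
  then have "{set_density E S | S. S \<noteq> {} \<and> S \<subseteq> {0..<n}} \<noteq> {}" by blast
  from Max_in[OF finite_densities this] show ?thesis
    using that unfolding max_density_def by blast
qed

lemma max_density_le:
  assumes "is_graph n E" "1 \<le> n"
  shows "max_density n E \<le> real n"
proof -
  obtain S where S: "S \<noteq> {}" "S \<subseteq> {0..<n}" "max_density n E = set_density E S"
    using max_density_attained[OF assms(2)] .
  then have "finite S" "card S \<le> n"
    using finite_subset card_mono[of "{0..<n}" S] by auto
  with S set_density_le_half_card[OF assms(1)] show ?thesis by fastforce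
qed

definition large_subsets :: "nat \<Rightarrow> nat \<Rightarrow> nat set set" where
  "large_subsets n k = {S. S \<subseteq> {0..<n} \<and> S \<noteq> {} \<and> k \<le> card S}"

definition large_density :: "nat \<Rightarrow> nat \<Rightarrow> nat set set \<Rightarrow> real" where
  "large_density n k E = Max (insert 0 (set_density E ` large_subsets n k))"

lemma finite_large_subsets: "finite (large_subsets n k)"
  by (rule finite_subset[of _ "Pow {0..<n}"]) (auto simp: large_subsets_def)

lemma large_density_le_iff:
  "large_density n k E \<le> c \<longleftrightarrow> 0 \<le> c \<and> (\<forall>S\<in>large_subsets n k. set_density E S \<le> c)"
  unfolding large_density_def by (simp add: finite_large_subsets)

lemma large_density_nonneg: "0 \<le> large_density n k E"
  unfolding large_density_def by (simp add: finite_large_subsets)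

lemma set_density_le_large_density:
  "S \<in> large_subsets n k \<Longrightarrow> set_density E S \<le> large_density n k E"
  unfolding large_density_def by (simp add: finite_large_subsets)

lemma large_density_le_max_density:
  assumes "1 \<le> n"
  shows "large_density n k E \<le> max_density n E"
proof -
  have "set_density E {0} \<le> max_density n E"
    using assms by (intro set_density_le_max_density) auto
  then have "0 \<le> max_density n E"
    using set_density_nonneg order.trans by blast
  then show ?thesis
    by (auto simp: large_density_le_iff large_subsets_def intro: set_density_le_max_density)
qed

lemma max_density_le_large_density:
  assumes "is_graph n E" "1 \<le> n" "1 \<le> k"
  shows "max_density n E \<le> large_density n k E + (real k - 1) / 2"
proof -
  obtain S where S: "S \<noteq> {}" "S \<subseteq> {0..<n}" "max_density n E = set_density E S"
    using max_density_attained[OF assms(2)] .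
  show ?thesis
  proof (cases "k \<le> card S")
    case True
    then have "set_density E S \<le> large_density n k E"
      using S by (intro set_density_le_large_density) (simp add: large_subsets_def)
    moreover have "0 \<le> (real k - 1) / 2" using assms(3) by simp
    ultimately show ?thesis using S by linarith
  next
    case False
    then have "set_density E S \<le> (real k - 1) / 2"
      using set_density_le_half_card[OF assms(1) finite_subset[OF S(2)] S(1)] by simp
    then show ?thesis using S large_density_nonneg[of n k E] by linarith
  qed
qed

lemma large_density_neighboring_le:
  assumes "edge_neighboring n E E'" "1 \<le> k"
  shows "large_density n k E \<le> large_density n k E' + 1 / real k"
proof -
  have "set_density E S \<le> large_density n k E' + 1 / real k" if "S \<in> large_subsets n k" for S
    using that set_density_neighboring_le[OF assms(1) _ assms(2), of S]
      set_density_le_large_density[OF that, of E'] by (simp add: large_subsets_def)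
  then show ?thesis
    using large_density_nonneg[of n k E'] by (simp add: large_density_le_iff)
qed

lemma large_density_sensitivity:
  assumes "edge_neighboring n E E'" "1 \<le> k"
  shows "\<bar>large_density n k E - large_density n k E'\<bar> \<le> 1 / real k"
  using large_density_neighboring_le[OF assms]
    large_density_neighboring_le[OF edge_neighboring_sym[OF assms(1)] assms(2)]
  by linarith

definition size_threshold :: "real \<Rightarrow> nat \<Rightarrow> nat" where
  "size_threshold \<epsilon> n = max 1 (nat \<lceil>sqrt (ln (real n) / \<epsilon>)\<rceil>)"

definition density_mech_pmf :: "real \<Rightarrow> nat \<Rightarrow> nat set set \<Rightarrow> real pmf" where
  "density_mech_pmf \<epsilon> n E =
     (let k = size_threshold \<epsilon> n
      in exp_mech (\<epsilon> * real k / 2) (real ` {0..n}) (large_density n k E))"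

definition density_mech :: "real \<Rightarrow> nat \<Rightarrow> nat set set \<Rightarrow> real measure" where
  "density_mech \<epsilon> n E = distr (measure_pmf (density_mech_pmf \<epsilon> n E)) borel id"

lemma measure_density_mech:
  "S \<in> sets borel \<Longrightarrow> measure (density_mech \<epsilon> n E) S = measure (density_mech_pmf \<epsilon> n E) S"
  unfolding density_mech_def by (subst measure_distr) auto

lemma valid_mechanism_density_mech: "valid_mechanism (density_mech \<epsilon>)"
  unfolding valid_mechanism_def density_mech_def
  by (auto intro!: prob_space.prob_space_distr prob_space_measure_pmf)

lemma edge_dp_density_mech:
  assumes "0 < \<epsilon>"
  shows "edge_dp \<epsilon> (density_mech \<epsilon>)"
  unfolding edge_dp_def
proof (intro allI impI)
  fix n E E' and S :: "real set"
  assume nb: "edge_neighboring n E E'" and S: "S \<in> sets borel"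
  define k where "k = size_threshold \<epsilon> n"
  define a where "a = \<epsilon> * real k / 2"
  have "1 \<le> k" by (simp add: k_def size_threshold_def)
  then have \<epsilon>: "2 * a * (1 / real k) = \<epsilon>" by (simp add: a_def)
  have "measure (exp_mech a (real ` {0..n}) (large_density n k E)) S
      \<le> exp (2 * a * (1 / real k)) * measure (exp_mech a (real ` {0..n}) (large_density n k E')) S"
    using large_density_sensitivity[OF nb \<open>1 \<le> k\<close>] assms
    by (intro measure_exp_mech_shift) (auto simp: a_def)
  then show "measure (density_mech \<epsilon> n E) S \<le> exp \<epsilon> * measure (density_mech \<epsilon> n E') S"
    unfolding \<epsilon> measure_density_mech[OF S] density_mech_pmf_def Let_def k_def[symmetric] a_def[symmetric] .
qed

lemma size_threshold_bounds:
  fixes t :: real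
  assumes "1 \<le> t" "t = sqrt (ln (real n) / \<epsilon>)"
  shows "t \<le> size_threshold \<epsilon> n" "size_threshold \<epsilon> n \<le> t + 1"
proof -
  have "1 \<le> \<lceil>t\<rceil>" using assms(1) by simp
  then have "size_threshold \<epsilon> n = nat \<lceil>t\<rceil>"
    unfolding size_threshold_def assms(2)[symmetric] by linarith
  then have "real (size_threshold \<epsilon> n) = of_int \<lceil>t\<rceil>"
    using \<open>1 \<le> \<lceil>t\<rceil>\<close> by simp
  then show "t \<le> size_threshold \<epsilon> n" "size_threshold \<epsilon> n \<le> t + 1"
    by (simp_all add: le_of_int_ceiling of_int_ceiling_le_add_one)
qed

lemma nearest_point_in_range:
  assumes "0 \<le> h" "h \<le> real n"
  shows "real (nat \<lfloor>h\<rfloor>) \<in> real ` {0..n}" "\<bar>real (nat \<lfloor>h\<rfloor>) - h\<bar> \<le> 1"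
proof -
  have "nat \<lfloor>h\<rfloor> \<le> n" using assms by linarith
  then show "real (nat \<lfloor>h\<rfloor>) \<in> real ` {0..n}" by simp
  show "\<bar>real (nat \<lfloor>h\<rfloor>) - h\<bar> \<le> 1" using assms by linarith
qed

lemma succ_div_cube_le:
  assumes "3 \<le> n"
  shows "real (n + 1) * exp (- 3 * ln (real n)) \<le> 1 / real n"
proof -
  have "3 * ln (real n) = ln (real n ^ 3)"
    using assms by (simp add: ln_realpow)
  then have cube: "exp (- 3 * ln (real n)) = 1 / real n ^ 3"
    using assms by (simp add: exp_minus inverse_eq_divide)
  have "real n * 3 \<le> real n * real n"
    using assms by (intro mult_left_mono) auto
  then have "real n + 1 \<le> real n * real n"
    using assms by linarith
  then have "real n * (real n + 1) \<le> real n * (real n * real n)"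
    by (intro mult_left_mono) auto
  then show ?thesis
    unfolding cube using assms by (simp add: field_simps power3_eq_cube)
qed

lemma density_mech_pmf_tail:
  assumes "0 < \<epsilon>" "1 \<le> n" "is_graph n E"
  defines "k \<equiv> size_threshold \<epsilon> n"
  shows "measure (density_mech_pmf \<epsilon> n E) {y. r \<le> \<bar>y - large_density n k E\<bar>}
    \<le> real (n + 1) * exp (- (\<epsilon> * real k / 2) * (r - 1))"
proof -
  have "0 \<le> large_density n k E" "large_density n k E \<le> real n"
    using large_density_le_max_density max_density_le[OF assms(3,2)] large_density_nonneg assms(2)
    by (auto intro: order.trans)
  note near = nearest_point_in_range[OF this]
  show ?thesis
    using measure_exp_mech_tail[OF _ near, of "\<epsilon> * real k / 2" r] assms(1)
    by (simp add: density_mech_pmf_def Let_def k_def card_image)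
qed

lemma ln_div_ge_one:
  assumes "0 < \<epsilon>" "\<epsilon> \<le> 1" "3 \<le> n"
  shows "1 \<le> ln (real n) / \<epsilon>"
proof -
  have "exp 1 \<le> real n" using exp_le assms(3) by linarith
  then have "1 \<le> ln (real n)" using assms(3) by (subst ln_ge_iff) auto
  then show ?thesis using assms(1,2) by (simp add: le_divide_eq)
qed

lemma three_ln_le_exponent:
  fixes \<epsilon> t k :: real
  assumes "0 < \<epsilon>" "1 \<le> t" "t * t = L / \<epsilon>" "t \<le> k"
  shows "3 * L \<le> \<epsilon> * k / 2 * (7 * t - 1)"
proof -
  have "3 * L = 3 * \<epsilon> * (t * t)" using assms(1,3) by simp
  also have "\<dots> \<le> 3 * \<epsilon> * (k * t)"
    using assms by (intro mult_left_mono mult_right_mono) auto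
  also have "\<dots> = \<epsilon> * k / 2 * (6 * t)" by simp
  also have "\<dots> \<le> \<epsilon> * k / 2 * (7 * t - 1)"
    using assms by (intro mult_left_mono) auto
  finally show ?thesis .
qed

lemma density_mech_accuracy:
  assumes "0 < \<epsilon>" "\<epsilon> \<le> 1" "3 \<le> n" "is_graph n E"
  shows "1 - 1 / real n
    \<le> measure (density_mech \<epsilon> n E) {x. \<bar>x - max_density n E\<bar> \<le> 8 * sqrt (ln (real n) / \<epsilon>)}"
proof -
  define t where "t = sqrt (ln (real n) / \<epsilon>)"
  define k where "k = size_threshold \<epsilon> n"
  define h where "h = large_density n k E"
  let ?p = "density_mech_pmf \<epsilon> n E"
  let ?G = "{x. \<bar>x - max_density n E\<bar> \<le> 8 * t}"
  have L: "1 \<le> ln (real n) / \<epsilon>" using ln_div_ge_one assms by blast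
  then have t: "1 \<le> t" "t * t = ln (real n) / \<epsilon>"
    unfolding t_def by (simp_all only: real_sqrt_ge_one real_sqrt_mult_self abs_of_nonneg
        order.trans[OF zero_le_one L])
  have k: "t \<le> real k" "real k \<le> t + 1" "1 \<le> k"
    using size_threshold_bounds[OF t(1) t_def] by (simp_all add: k_def size_threshold_def)
  have n: "1 \<le> n" using assms(3) by simp
  have "h \<le> max_density n E" "max_density n E \<le> h + (real k - 1) / 2"
    using large_density_le_max_density max_density_le_large_density assms(4) n k(3)
    by (simp_all add: h_def)
  then have close: "\<bar>max_density n E - h\<bar> \<le> t / 2"
    using k(2) t(1) unfolding diff_divide_distrib by linarith
  have far: "UNIV - ?G \<subseteq> {y. 7 * t \<le> \<bar>y - h\<bar>}"
  proof
    fix x assume "x \<in> UNIV - ?G"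
    then have "8 * t < \<bar>x - max_density n E\<bar>" by simp
    with close t(1) have "7 * t \<le> \<bar>x - h\<bar>" by arith
    then show "x \<in> {y. 7 * t \<le> \<bar>y - h\<bar>}" by simp
  qed
  have "measure ?p (UNIV - ?G) \<le> measure ?p {y. 7 * t \<le> \<bar>y - h\<bar>}"
    using far by (intro measure_pmf.finite_measure_mono) auto
  also have "\<dots> \<le> real (n + 1) * exp (- (\<epsilon> * real k / 2) * (7 * t - 1))"
    using density_mech_pmf_tail[OF assms(1) n assms(4)] by (simp add: h_def k_def)
  also have "\<dots> \<le> real (n + 1) * exp (- 3 * ln (real n))"
    using three_ln_le_exponent[OF assms(1) t k(1)] by simp
  also have "\<dots> \<le> 1 / real n" using succ_div_cube_le[OF assms(3)] .
  finally have "1 - 1 / real n \<le> measure ?p ?G"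
    using measure_pmf.prob_compl[of ?G ?p] by simp
  then show ?thesis
    by (subst measure_density_mech) (auto simp: t_def)
qed

theorem mainTheorem14:
  shows "\<exists>C::real. \<forall>\<epsilon>::real. 0 < \<epsilon> \<and> \<epsilon> \<le> 1 \<longrightarrow>
     (\<exists>A. valid_mechanism A \<and> edge_dp \<epsilon> A \<and>
        (\<forall>n E. n \<ge> 3 \<longrightarrow> is_graph n E \<longrightarrow>
           measure (A n E) {x. \<bar>x - max_density n E\<bar> \<le> C * sqrt (ln (real n) / \<epsilon>)}
             \<ge> 1 - 1 / real n))"
proof (intro exI allI impI)
  fix \<epsilon> :: real
  assume "0 < \<epsilon> \<and> \<epsilon> \<le> 1"
  then show "valid_mechanism (density_mech \<epsilon>) \<and> edge_dp \<epsilon> (density_mech \<epsilon>) \<and>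
    (\<forall>n E. 3 \<le> n \<longrightarrow> is_graph n E \<longrightarrow> 1 - 1 / real n \<le> measure (density_mech \<epsilon> n E)
       {x. \<bar>x - max_density n E\<bar> \<le> 8 * sqrt (ln (real n) / \<epsilon>)})"
    using valid_mechanism_density_mech edge_dp_density_mech density_mech_accuracy by blast
qed

end
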